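(* Let $K$ be a compact subset of $M$ and let $U$ be a relatively open subset of $M$ with $K\subset U$. Then there is a compact set $K'$ with $K\subset K'\subset U$ such that $K'$ satisfies the bi-Lipschitz cone condition.
   Context: $\Omega\subset\mathbb{R}^n$ is a bounded, connected open set which, near each boundary point, is equivalent to a half space via a bi-Lipschitz map; $M=\bar\Omega$. Bi-Lipschitz cone condition for compact $K\subset M$: there are $r,\varepsilon>0$ such that for each $x_0\in\partial K$ there is $F:B_r(x_0)\to\mathbb{R}^n$, $F(x_0)=0$, $\varepsilon|x-y|\le|F(x)-F(y)|\le\varepsilon^{-1}|x-y|$, with $F(K\cap B_r(x_0))\supset\{(x_1,x')\in\mathbb{R}\times\mathbb{R}^{n-1}:|x'|<\varepsilon x_1<\varepsilon^2\}$. *)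

theory Defs
  imports "HOL-Analysis.Analysis"
begin

definition e1 :: "'a::euclidean_space" where
  "e1 = (SOME b. b \<in> Basis)"

definition first_coord :: "'a::euclidean_space \<Rightarrow> real" where
  "first_coord x = x \<bullet> e1"

definition rest_coords :: "'a::euclidean_space \<Rightarrow> 'a" where
  "rest_coords x = x - (x \<bullet> e1) *\<^sub>R e1"

definition half_space :: "'a::euclidean_space set" where
  "half_space = {x. first_coord x > 0}"

definition bi_lipschitz_on :: "real \<Rightarrow> 'a::metric_space set \<Rightarrow> ('a \<Rightarrow> 'b::metric_space) \<Rightarrow> bool" where
  "bi_lipschitz_on L S F \<longleftrightarrow> L > 0 \<and>
     (\<forall>x\<in>S. \<forall>y\<in>S. dist x y \<le> L * dist (F x) (F y) \<and> dist (F x) (F y) \<le> L * dist x y)"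

definition bilip_domain :: "'a::euclidean_space set \<Rightarrow> bool" where
  "bilip_domain \<Omega> \<longleftrightarrow> bounded \<Omega> \<and> connected \<Omega> \<and> open \<Omega> \<and>
     (\<forall>p\<in>frontier \<Omega>. \<exists>V (\<Phi>::'a \<Rightarrow> 'a) L. open V \<and> p \<in> V \<and> bi_lipschitz_on L V \<Phi> \<and>
         open (\<Phi> ` V) \<and> \<Phi> ` (V \<inter> \<Omega>) = \<Phi> ` V \<inter> half_space)"

definition cone_set :: "real \<Rightarrow> 'a::euclidean_space set" where
  "cone_set \<epsilon> = {x. norm (rest_coords x) < \<epsilon> * first_coord x \<and> \<epsilon> * first_coord x < \<epsilon>\<^sup>2}"

text \<open>Bi-Lipschitz cone condition for K (boundary of K taken in R^n).\<close>
definition bilip_cone_condition :: "'a::euclidean_space set \<Rightarrow> bool" where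
  "bilip_cone_condition K \<longleftrightarrow> (\<exists>r>0. \<exists>\<epsilon>>0. \<forall>x0\<in>frontier K. \<exists>F::'a \<Rightarrow> 'a.
      F x0 = 0 \<and>
      (\<forall>x\<in>ball x0 r. \<forall>y\<in>ball x0 r.
          \<epsilon> * dist x y \<le> dist (F x) (F y) \<and> dist (F x) (F y) \<le> dist x y / \<epsilon>) \<and>
      cone_set \<epsilon> \<subseteq> F ` (K \<inter> ball x0 r))"

end

theory Submission
  imports Defs
begin

(* Near each point of K the set closure Omega is covered by a compact piece: a closed ball inside
   Omega, or near the boundary the preimage under the bi-Lipschitz chart of a closed half-ball.
   Each piece is the bi-Lipschitz preimage of a compact convex set S containing a ball B, so at a
   boundary point x0 of the piece the image y0 lies outside B, and the convex hull of y0 and B,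
   which lies in S, contains a cone with vertex y0 pointing towards B.  Composing the chart with a
   translation and a reflection moves this cone onto the standard cone, with constants that are
   uniform over the piece and scale linearly with the radius.  Finitely many pieces cover K, and
   their union inherits the cone condition with the minima of the constants. *)

text \<open>For \<open>u = 0\<close> the division by zero makes this the identity, so no lemma below needs \<open>u \<noteq> 0\<close>.\<close>
definition hyperplane_reflection :: "'a::real_inner \<Rightarrow> 'a \<Rightarrow> 'a" where
  "hyperplane_reflection u v = v - (2 * (v \<bullet> u) / (u \<bullet> u)) *\<^sub>R u"

lemma linear_hyperplane_reflection: "linear (hyperplane_reflection u)"
  by (rule linearI) (simp_all add: hyperplane_reflection_def algebra_simps add_divide_distrib)

lemma norm_hyperplane_reflection [simp]: "norm (hyperplane_reflection u v) = norm v"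
proof (cases "u = 0")
  case False
  define t where "t = 2 * (v \<bullet> u) / (u \<bullet> u)"
  have "(norm (v - t *\<^sub>R u))\<^sup>2 = v \<bullet> v - 2 * t * (v \<bullet> u) + t\<^sup>2 * (u \<bullet> u)"
    unfolding power2_norm_eq_inner by (simp add: inner_commute power2_eq_square algebra_simps)
  also have "\<dots> = (norm v)\<^sup>2"
    using False unfolding power2_norm_eq_inner by (simp add: t_def power2_eq_square field_simps)
  finally show ?thesis
    by (simp add: hyperplane_reflection_def t_def)
qed (simp add: hyperplane_reflection_def)

lemma hyperplane_reflection_involutive [simp]:
  "hyperplane_reflection u (hyperplane_reflection u v) = v"
proof (cases "u = 0")
  case False
  then show ?thesis
    by (simp add: hyperplane_reflection_def inner_diff_left field_simps)
qed (simp add: hyperplane_reflection_def)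

lemma hyperplane_reflection_swap:
  assumes "norm a = norm b"
  shows "hyperplane_reflection (a - b) a = b"
proof (cases "a = b")
  case False
  have "a \<bullet> a = b \<bullet> b" using assms by (simp add: dot_square_norm)
  then have "(a - b) \<bullet> (a - b) = 2 * (a \<bullet> (a - b))"
    by (simp add: inner_diff_left inner_diff_right inner_commute)
  moreover have "(a - b) \<bullet> (a - b) \<noteq> 0" using False by simp
  ultimately have coeff: "2 * (a \<bullet> (a - b)) / ((a - b) \<bullet> (a - b)) = 1" by (metis divide_self)
  show ?thesis unfolding hyperplane_reflection_def coeff by simp
qed (simp add: hyperplane_reflection_def)

lemma e1_Basis: "(e1::'a::euclidean_space) \<in> Basis"
  unfolding e1_def by (rule someI_ex) (use nonempty_Basis in blast)

lemma norm_e1 [simp]: "norm (e1::'a::euclidean_space) = 1"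
  by (rule norm_Basis[OF e1_Basis])

lemma inner_e1_self [simp]: "(e1::'a::euclidean_space) \<bullet> e1 = 1"
  by (simp add: e1_Basis)

lemma cone_setD:
  assumes "z \<in> cone_set \<epsilon>" "\<epsilon> > 0"
  shows "0 < z \<bullet> e1" "z \<bullet> e1 < \<epsilon>" "norm (z - (z \<bullet> e1) *\<^sub>R e1) < \<epsilon> * (z \<bullet> e1)"
proof -
  have z: "norm (z - (z \<bullet> e1) *\<^sub>R e1) < \<epsilon> * (z \<bullet> e1)" "\<epsilon> * (z \<bullet> e1) < \<epsilon>\<^sup>2"
    using assms(1) by (auto simp: cone_set_def rest_coords_def first_coord_def)
  show "norm (z - (z \<bullet> e1) *\<^sub>R e1) < \<epsilon> * (z \<bullet> e1)" by (fact z(1))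
  show "z \<bullet> e1 < \<epsilon>" using z(2) assms(2) by (simp add: power2_eq_square)
  have "0 < \<epsilon> * (z \<bullet> e1)" using z(1) norm_ge_zero by (rule le_less_trans[rotated])
  then show "0 < z \<bullet> e1" using assms(2) by (simp add: zero_less_mult_iff)
qed

lemma norm_less_cone_set:
  assumes "z \<in> cone_set \<epsilon>" "0 < \<epsilon>" "\<epsilon> \<le> 1"
  shows "norm z < 2 * \<epsilon>"
proof -
  note z = cone_setD[OF assms(1,2)]
  have "norm z \<le> norm ((z \<bullet> e1) *\<^sub>R (e1::'a)) + norm (z - (z \<bullet> e1) *\<^sub>R e1)"
    by (rule norm_triangle_sub)
  also have "\<dots> < \<epsilon> + \<epsilon> * (z \<bullet> e1)" using z by simp
  also have "\<epsilon> * (z \<bullet> e1) \<le> \<epsilon>" using z assms(3) by (simp add: mult_le_cancel_left1)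
  finally show ?thesis by simp
qed

lemma cone_set_antimono:
  fixes \<epsilon> :: real
  assumes "0 < \<epsilon>" "\<epsilon> \<le> \<epsilon>'"
  shows "(cone_set \<epsilon> :: 'a::euclidean_space set) \<subseteq> cone_set \<epsilon>'"
proof
  fix z :: 'a assume z: "z \<in> cone_set \<epsilon>"
  note zc = cone_setD[OF z assms(1)]
  have "norm (z - (z \<bullet> e1) *\<^sub>R e1) < \<epsilon>' * (z \<bullet> e1)"
    using zc assms by (meson less_le_trans mult_right_mono less_imp_le)
  moreover have "\<epsilon>' * (z \<bullet> e1) < \<epsilon>'\<^sup>2"
    using zc assms by (simp add: power2_eq_square)
  ultimately show "z \<in> cone_set \<epsilon>'"
    by (simp add: cone_set_def rest_coords_def first_coord_def)
qed

definition cone_chart_at :: "real \<Rightarrow> real \<Rightarrow> 'a::euclidean_space set \<Rightarrow> 'a \<Rightarrow> bool" where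
  "cone_chart_at r \<epsilon> K x0 \<longleftrightarrow> (\<exists>F::'a \<Rightarrow> 'a. F x0 = 0 \<and>
      (\<forall>x\<in>ball x0 r. \<forall>y\<in>ball x0 r. \<epsilon> * dist x y \<le> dist (F x) (F y) \<and> dist (F x) (F y) \<le> dist x y / \<epsilon>) \<and>
      cone_set \<epsilon> \<subseteq> F ` (K \<inter> ball x0 r))"

lemma bilip_cone_condition_iff_cone_chart_at:
  "bilip_cone_condition K \<longleftrightarrow> (\<exists>r>0. \<exists>\<epsilon>>0. \<forall>x0\<in>frontier K. cone_chart_at r \<epsilon> K x0)"
  by (simp add: bilip_cone_condition_def cone_chart_at_def)

lemma cone_chart_at_mono:
  fixes K :: "'a::euclidean_space set"
  assumes "cone_chart_at r \<epsilon> K x0" "K \<subseteq> K'" "0 < \<epsilon>'" "\<epsilon>' \<le> \<epsilon>"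
  shows "cone_chart_at r \<epsilon>' K' x0"
proof -
  obtain F :: "'a \<Rightarrow> 'a" where F: "F x0 = 0"
      "\<And>x y. x \<in> ball x0 r \<Longrightarrow> y \<in> ball x0 r \<Longrightarrow> \<epsilon> * dist x y \<le> dist (F x) (F y) \<and> dist (F x) (F y) \<le> dist x y / \<epsilon>"
      "cone_set \<epsilon> \<subseteq> F ` (K \<inter> ball x0 r)"
    using assms(1) unfolding cone_chart_at_def by blast
  have "\<epsilon>' * dist x y \<le> dist (F x) (F y) \<and> dist (F x) (F y) \<le> dist x y / \<epsilon>'"
    if "x \<in> ball x0 r" "y \<in> ball x0 r" for x y
  proof -
    have "\<epsilon>' * dist x y \<le> \<epsilon> * dist x y" "dist x y / \<epsilon> \<le> dist x y / \<epsilon>'"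
      using assms(3,4) by (simp_all add: mult_right_mono frac_le)
    then show ?thesis using F(2)[OF that] by linarith
  qed
  moreover have "cone_set \<epsilon>' \<subseteq> F ` (K' \<inter> ball x0 r)"
    using cone_set_antimono[OF assms(3,4)] F(3) assms(2) by fast
  ultimately show ?thesis using F(1) unfolding cone_chart_at_def by (intro exI[of _ F]) simp
qed

text \<open>Unlike \<open>bilip_cone_condition\<close>, this survives finite unions: with the aperture
  proportional to the radius, the pieces can share the smallest radius.\<close>
definition uniform_cone_charts :: "'a::euclidean_space set \<Rightarrow> bool" where
  "uniform_cone_charts K \<longleftrightarrow> (\<exists>r0>0. \<exists>\<kappa>>0. \<forall>x0\<in>K - interior K. \<forall>r. 0 < r \<and> r \<le> r0 \<longrightarrow>
      cone_chart_at r (\<kappa> * r) K x0)"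

lemma uniform_cone_chartsI:
  assumes "0 < r0" "0 < \<kappa>"
    "\<And>x0 r. x0 \<in> K - interior K \<Longrightarrow> 0 < r \<Longrightarrow> r \<le> r0 \<Longrightarrow> cone_chart_at r (\<kappa> * r) K x0"
  shows "uniform_cone_charts K"
  using assms unfolding uniform_cone_charts_def by blast

lemma uniform_cone_chartsE:
  assumes "uniform_cone_charts K"
  obtains r0 \<kappa> where "0 < r0" "0 < \<kappa>"
    "\<And>x0 r. x0 \<in> K - interior K \<Longrightarrow> 0 < r \<Longrightarrow> r \<le> r0 \<Longrightarrow> cone_chart_at r (\<kappa> * r) K x0"
  using assms unfolding uniform_cone_charts_def by blast

lemma uniform_cone_charts_empty: "uniform_cone_charts {}"
  by (rule uniform_cone_chartsI[of 1 1]) auto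

lemma uniform_cone_charts_Un:
  assumes "uniform_cone_charts A" "uniform_cone_charts B"
  shows "uniform_cone_charts (A \<union> B)"
proof -
  obtain rA \<kappa>A where A: "rA > 0" "\<kappa>A > 0"
      "\<And>x0 r. x0 \<in> A - interior A \<Longrightarrow> 0 < r \<Longrightarrow> r \<le> rA \<Longrightarrow> cone_chart_at r (\<kappa>A * r) A x0"
    using assms(1) by (rule uniform_cone_chartsE) blast
  obtain rB \<kappa>B where B: "rB > 0" "\<kappa>B > 0"
      "\<And>x0 r. x0 \<in> B - interior B \<Longrightarrow> 0 < r \<Longrightarrow> r \<le> rB \<Longrightarrow> cone_chart_at r (\<kappa>B * r) B x0"
    using assms(2) by (rule uniform_cone_chartsE) blast
  have "min \<kappa>A \<kappa>B * r \<le> \<kappa>A * r" "min \<kappa>A \<kappa>B * r \<le> \<kappa>B * r" "0 < min \<kappa>A \<kappa>B * r"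
    if "0 < r" for r
    using that A(2) B(2) by (simp_all add: mult_right_mono)
  moreover have "interior A \<subseteq> interior (A \<union> B)" "interior B \<subseteq> interior (A \<union> B)"
    by (simp_all add: interior_mono)
  ultimately have "cone_chart_at r (min \<kappa>A \<kappa>B * r) (A \<union> B) x0"
    if x0: "x0 \<in> (A \<union> B) - interior (A \<union> B)" and r: "0 < r" "r \<le> min rA rB" for x0 r
    using x0 r A(3)[of x0 r] B(3)[of x0 r] cone_chart_at_mono[of r _ _ x0 "A \<union> B" "min \<kappa>A \<kappa>B * r"]
    by (metis Diff_iff Un_iff Un_upper1 Un_upper2 min.bounded_iff subsetD)
  moreover have "0 < min rA rB" "0 < min \<kappa>A \<kappa>B" using A(1,2) B(1,2) by simp_all
  ultimately show ?thesis by (intro uniform_cone_chartsI[of "min rA rB" "min \<kappa>A \<kappa>B"]) auto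
qed

lemma uniform_cone_charts_Union:
  "finite \<P> \<Longrightarrow> (\<And>P. P \<in> \<P> \<Longrightarrow> uniform_cone_charts P) \<Longrightarrow> uniform_cone_charts (\<Union>\<P>)"
  by (induction \<P> rule: finite_induct) (simp_all add: uniform_cone_charts_empty uniform_cone_charts_Un)

lemma bilip_cone_condition_if_uniform_cone_charts:
  assumes "closed K" "uniform_cone_charts K"
  shows "bilip_cone_condition K"
proof -
  obtain r0 \<kappa> where r0: "r0 > 0" "\<kappa> > 0"
      "\<And>x0 r. x0 \<in> K - interior K \<Longrightarrow> 0 < r \<Longrightarrow> r \<le> r0 \<Longrightarrow> cone_chart_at r (\<kappa> * r) K x0"
    using assms(2) by (rule uniform_cone_chartsE) blast
  have "frontier K \<subseteq> K - interior K"
    using assms(1) by (simp add: frontier_def)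
  then have "\<forall>x0\<in>frontier K. cone_chart_at r0 (\<kappa> * r0) K x0" using r0 by blast
  moreover have "\<kappa> * r0 > 0" using r0(1,2) by simp
  ultimately show ?thesis unfolding bilip_cone_condition_iff_cone_chart_at
    using r0(1) by blast
qed

lemma bi_lipschitz_on_pos: "bi_lipschitz_on L V \<Phi> \<Longrightarrow> L > 0"
  by (simp add: bi_lipschitz_on_def)

lemma bi_lipschitz_on_subset: "bi_lipschitz_on L V \<Phi> \<Longrightarrow> W \<subseteq> V \<Longrightarrow> bi_lipschitz_on L W \<Phi>"
  unfolding bi_lipschitz_on_def by blast

lemma inj_on_bi_lipschitz: "bi_lipschitz_on L V \<Phi> \<Longrightarrow> inj_on \<Phi> V"
  unfolding inj_on_def bi_lipschitz_on_def
  by (metis dist_eq_0_iff mult_zero_right order_antisym zero_le_dist)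

lemma continuous_on_bi_lipschitz: "bi_lipschitz_on L V \<Phi> \<Longrightarrow> continuous_on V \<Phi>"
  by (rule lipschitz_on_continuous_on[of L]) (auto simp: lipschitz_on_def bi_lipschitz_on_def)

lemma dist_inv_into_bi_lipschitz_le:
  assumes "bi_lipschitz_on L V \<Phi>" "a \<in> \<Phi> ` V" "b \<in> \<Phi> ` V"
  shows "dist (inv_into V \<Phi> a) (inv_into V \<Phi> b) \<le> L * dist a b"
  using assms inv_into_into[OF assms(2)] inv_into_into[OF assms(3)]
  unfolding bi_lipschitz_on_def by (metis f_inv_into_f)

lemma continuous_on_inv_into_bi_lipschitz:
  assumes "bi_lipschitz_on L V \<Phi>"
  shows "continuous_on (\<Phi> ` V) (inv_into V \<Phi>)"
  using assms by (intro lipschitz_on_continuous_on[of L])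
    (auto simp: lipschitz_on_def dist_inv_into_bi_lipschitz_le bi_lipschitz_on_pos less_imp_le)

lemma bi_lipschitz_preimage_eq_image_inv_into:
  assumes "bi_lipschitz_on L V \<Phi>" "S \<subseteq> \<Phi> ` V"
  shows "{x\<in>V. \<Phi> x \<in> S} = inv_into V \<Phi> ` S"
proof
  show "{x\<in>V. \<Phi> x \<in> S} \<subseteq> inv_into V \<Phi> ` S"
    using inj_on_bi_lipschitz[OF assms(1)] by (metis (mono_tags, lifting) inv_into_f_f image_eqI mem_Collect_eq subsetI)
  show "inv_into V \<Phi> ` S \<subseteq> {x\<in>V. \<Phi> x \<in> S}"
    using assms(2) by (auto simp: inv_into_into f_inv_into_f)
qed

lemma compact_bi_lipschitz_preimage:
  assumes "bi_lipschitz_on L V \<Phi>" "compact S" "S \<subseteq> \<Phi> ` V"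
  shows "compact {x\<in>V. \<Phi> x \<in> S}"
  unfolding bi_lipschitz_preimage_eq_image_inv_into[OF assms(1,3)]
  using assms by (intro compact_continuous_image continuous_on_subset[OF continuous_on_inv_into_bi_lipschitz])

lemma open_image_bi_lipschitz:
  assumes "bi_lipschitz_on L V \<Phi>" "open (\<Phi> ` V)" "open N" "N \<subseteq> V"
  shows "open (\<Phi> ` N)"
proof -
  have "\<Phi> ` N = \<Phi> ` V \<inter> inv_into V \<Phi> -` N"
    using assms(4) inj_on_bi_lipschitz[OF assms(1)] by (auto simp: f_inv_into_f inv_into_into image_iff)
  then show ?thesis
    using continuous_on_open_vimage[OF assms(2)] continuous_on_inv_into_bi_lipschitz[OF assms(1)] assms(3)
    by (metis inf_commute)
qed

text \<open>The convex hull of y0 and the ball contains a cone with vertex y0 around the direction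
  from y0 to c; the reflection R turns this direction into e1.\<close>
lemma cone_set_reflected_into_convex:
  fixes S :: "'a::euclidean_space set"
  assumes S: "convex S" "cball c \<delta> \<subseteq> S" "\<And>y. y \<in> S \<Longrightarrow> dist c y \<le> D"
    and y0: "y0 \<in> S" "\<delta> \<le> dist c y0"
    and \<epsilon>: "0 < \<epsilon>" "\<epsilon> \<le> \<delta>" "\<epsilon> * D \<le> \<delta>"
  obtains R :: "'a \<Rightarrow> 'a" where "linear R" "\<And>v. norm (R v) = norm v" "\<And>v. R (R v) = v"
    "\<And>z. z \<in> cone_set \<epsilon> \<Longrightarrow> y0 + R z \<in> S"
proof -
  define \<nu> where "\<nu> = dist c y0"
  have \<nu>: "\<delta> \<le> \<nu>" "\<nu> \<le> D" "0 < \<nu>"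
    using y0 S(3) \<epsilon> by (auto simp: \<nu>_def)
  define n where "n = (1 / \<nu>) *\<^sub>R (c - y0)"
  have "norm n = 1"
    using \<nu> by (simp add: n_def \<nu>_def dist_norm norm_minus_commute)
  define R where "R = hyperplane_reflection (e1 - n)"
  have R: "linear R" "R e1 = n"
    using \<open>norm n = 1\<close> by (simp_all add: R_def linear_hyperplane_reflection hyperplane_reflection_swap)
  have "y0 + R z \<in> S" if z: "z \<in> cone_set \<epsilon>" for z
  proof -
    define z1 where "z1 = z \<bullet> e1"
    define z' where "z' = z - z1 *\<^sub>R e1"
    have z1: "0 < z1" "z1 < \<epsilon>" "norm z' < \<epsilon> * z1"
      using cone_setD[OF z \<epsilon>(1)] by (simp_all add: z1_def z'_def)
    define s where "s = z1 / \<nu>"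
    have s: "0 < s" "s \<le> 1"
      using z1 \<nu> \<epsilon> by (simp_all add: s_def)
    define w where "w = (1 / s) *\<^sub>R R z'"
    have "R z = z1 *\<^sub>R n + R z'"
      using R by (simp add: z'_def linear_diff linear_scale)
    also have "z1 *\<^sub>R n = s *\<^sub>R (c - y0)"
      using \<nu> by (simp add: n_def s_def)
    finally have "y0 + R z = (1 - s) *\<^sub>R y0 + s *\<^sub>R (c + w)"
      using s by (simp add: w_def algebra_simps)
    moreover have "c + w \<in> S"
    proof -
      have "norm w = norm z' / s"
        using s by (simp add: w_def R_def)
      also have "\<dots> \<le> \<epsilon> * z1 / s"
        using z1 s by (simp add: divide_right_mono)
      also have "\<dots> = \<epsilon> * \<nu>"
        using z1 \<nu> by (simp add: s_def)
      also have "\<dots> \<le> \<delta>"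
        using \<nu> \<epsilon> by (meson mult_left_mono less_imp_le order_trans)
      finally show ?thesis
        using S(2) by (auto simp: dist_norm)
    qed
    ultimately show ?thesis
      using convexD[OF S(1) y0(1) _ _ _, of "c + w" "1 - s" s] s by simp
  qed
  then show thesis
    using that[of R] R(1) by (simp add: R_def)
qed

lemma cone_chart_at_bi_lipschitz_preimage:
  fixes \<Phi> R :: "'a::euclidean_space \<Rightarrow> 'a"
  assumes bl: "bi_lipschitz_on L V \<Phi>" and ball: "ball x0 r \<subseteq> V" and SV: "S \<subseteq> \<Phi> ` V"
    and \<epsilon>: "0 < \<epsilon>" "\<epsilon> \<le> 1" "\<epsilon> * L \<le> 1" "2 * L * \<epsilon> \<le> r"
    and R: "linear R" "\<And>v. norm (R v) = norm v" "\<And>v. R (R v) = v"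
      "\<And>z. z \<in> cone_set \<epsilon> \<Longrightarrow> \<Phi> x0 + R z \<in> S"
  shows "cone_chart_at r \<epsilon> {x\<in>V. \<Phi> x \<in> S} x0"
proof -
  have L: "0 < L" using bl by (rule bi_lipschitz_on_pos)
  then have "0 < r" using \<epsilon>(1,4) by (smt (verit) mult_pos_pos)
  then have "x0 \<in> V" using ball by auto
  define F where "F x = R (\<Phi> x - \<Phi> x0)" for x
  have dist_F: "dist (F x) (F y) = dist (\<Phi> x) (\<Phi> y)" for x y
    by (simp add: F_def dist_norm R(2) linear_diff[OF R(1), symmetric])
  have "F x0 = 0" by (simp add: F_def linear_0[OF R(1)])
  moreover have "\<epsilon> * dist x y \<le> dist (F x) (F y) \<and> dist (F x) (F y) \<le> dist x y / \<epsilon>"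
    if "x \<in> ball x0 r" "y \<in> ball x0 r" for x y
  proof -
    have "dist x y \<le> L * dist (\<Phi> x) (\<Phi> y)" "dist (\<Phi> x) (\<Phi> y) \<le> L * dist x y"
      using bl subsetD[OF ball that(1)] subsetD[OF ball that(2)] by (auto simp: bi_lipschitz_on_def)
    moreover have "\<epsilon> * (L * d) \<le> d" "L * d \<le> d / \<epsilon>" if "0 \<le> d" for d
      using \<epsilon>(1,3) that mult_right_mono[OF \<epsilon>(3) that] by (simp_all add: field_simps)
    ultimately show ?thesis
      unfolding dist_F by (meson mult_left_mono order_trans zero_le_dist \<epsilon>(1) less_imp_le)
  qed
  moreover have "cone_set \<epsilon> \<subseteq> F ` ({x\<in>V. \<Phi> x \<in> S} \<inter> ball x0 r)"
  proof
    fix z :: 'a assume z: "z \<in> cone_set \<epsilon>"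
    define y where "y = \<Phi> x0 + R z"
    define x where "x = inv_into V \<Phi> y"
    have y: "y \<in> S" "y \<in> \<Phi> ` V" using R(4)[OF z] SV by (auto simp: y_def)
    then have x: "x \<in> V" "\<Phi> x = y" by (simp_all add: x_def inv_into_into f_inv_into_f)
    have "dist x x0 \<le> L * dist y (\<Phi> x0)"
      using dist_inv_into_bi_lipschitz_le[OF bl y(2), of "\<Phi> x0"] \<open>x0 \<in> V\<close> inj_on_bi_lipschitz[OF bl]
      by (simp add: x_def)
    also have "\<dots> = L * norm z" by (simp add: y_def dist_norm R(2))
    also have "\<dots> < L * (2 * \<epsilon>)" using L norm_less_cone_set[OF z \<epsilon>(1,2)] by simp
    also have "\<dots> \<le> r" using \<epsilon>(4) by simp
    finally have "x \<in> ball x0 r" by (simp add: dist_commute)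
    moreover have "F x = z" by (simp add: F_def x y_def R(3))
    ultimately show "z \<in> F ` ({x\<in>V. \<Phi> x \<in> S} \<inter> ball x0 r)" using x y by blast
  qed
  ultimately show ?thesis unfolding cone_chart_at_def by blast
qed

lemma mem_interior_preimage:
  assumes "continuous_on V f" "open V" "x \<in> V" "f x \<in> interior S"
  shows "x \<in> interior {x\<in>V. f x \<in> S}"
proof -
  have "open (V \<inter> f -` interior S)" by (rule continuous_open_preimage[OF assms(1,2) open_interior])
  moreover have "x \<in> V \<inter> f -` interior S" using assms(3,4) by simp
  moreover have "V \<inter> f -` interior S \<subseteq> {x\<in>V. f x \<in> S}" using interior_subset by blast
  ultimately show ?thesis by (rule interiorI)
qed

lemma uniform_cone_charts_bi_lipschitz_preimage:
  fixes \<Phi> :: "'a::euclidean_space \<Rightarrow> 'a"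
  assumes V: "open V" "bi_lipschitz_on L V \<Phi>"
    and S: "convex S" "compact S" "0 < \<delta>" "cball c \<delta> \<subseteq> S" "S \<subseteq> \<Phi> ` V"
  shows "uniform_cone_charts {x\<in>V. \<Phi> x \<in> S}"
proof -
  define P where "P = {x\<in>V. \<Phi> x \<in> S}"
  have L: "0 < L" using V(2) by (rule bi_lipschitz_on_pos)
  have "compact P" unfolding P_def using V(2) S(2,5) by (rule compact_bi_lipschitz_preimage)
  moreover have "P \<subseteq> V" by (auto simp: P_def)
  ultimately obtain r0 where r0: "0 < r0" "(\<Union>x\<in>P. ball x r0) \<subseteq> V"
    using compact_subset_open_imp_ball_epsilon_subset V(1) by metis
  obtain D where D: "0 < D" "\<And>y. y \<in> S \<Longrightarrow> dist c y \<le> D"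
    using bounded_subset_ballD[OF compact_imp_bounded[OF S(2)], of c] by (auto simp: subset_eq less_imp_le)
  define \<kappa> where "\<kappa> = min (min 1 \<delta>) (min (\<delta> / D) (1 / (2 * L)))"
  have "\<kappa> \<le> \<delta> / D" "\<kappa> \<le> 1 / (2 * L)" by (simp_all add: \<kappa>_def)
  then have \<kappa>: "0 < \<kappa>" "\<kappa> \<le> 1" "\<kappa> \<le> \<delta>" "\<kappa> * D \<le> \<delta>" "2 * L * \<kappa> \<le> 1"
    using S(3) D(1) L by (simp_all add: \<kappa>_def le_divide_eq mult.commute)
  have "uniform_cone_charts P"
  proof (rule uniform_cone_chartsI)
    show "0 < min r0 1" using r0(1) by simp
    show "0 < \<kappa>" by (fact \<kappa>(1))
    fix x0 r assume x0: "x0 \<in> P - interior P" and r: "0 < r" "r \<le> min r0 1"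
    have "\<Phi> x0 \<notin> interior S"
    proof
      assume "\<Phi> x0 \<in> interior S"
      then have "x0 \<in> interior P" unfolding P_def using x0
        by (intro mem_interior_preimage[OF continuous_on_bi_lipschitz[OF V(2)] V(1)]) (simp add: P_def)
      then show False using x0 by simp
    qed
    moreover have "ball c \<delta> \<subseteq> interior S"
      by (rule interior_maximal[OF subset_trans[OF ball_subset_cball S(4)] open_ball])
    ultimately have "\<delta> \<le> dist c (\<Phi> x0)" by (auto simp: not_less[symmetric])
    have \<epsilon>: "0 < \<kappa> * r" "\<kappa> * r \<le> \<kappa>"
      using \<kappa>(1) r by (simp_all add: mult_left_le)
    then have "\<kappa> * r \<le> \<delta>" "\<kappa> * r * D \<le> \<delta>"
      using \<kappa>(3,4) mult_right_mono[OF \<epsilon>(2), of D] D(1) by linarith+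
    then obtain R :: "'a \<Rightarrow> 'a" where "linear R" "\<And>v. norm (R v) = norm v" "\<And>v. R (R v) = v"
        "\<And>z. z \<in> cone_set (\<kappa> * r) \<Longrightarrow> \<Phi> x0 + R z \<in> S"
      using cone_set_reflected_into_convex[OF S(1,4) D(2), of "\<Phi> x0" "\<kappa> * r"]
        \<open>\<delta> \<le> dist c (\<Phi> x0)\<close> x0 \<epsilon>(1) by (auto simp: P_def)
    moreover have "\<kappa> * r \<le> 1" using \<epsilon>(2) \<kappa>(2) by linarith
    moreover have "\<kappa> * r * L \<le> 1"
    proof -
      have "\<kappa> * r * L \<le> \<kappa> * L" using mult_right_mono[OF \<epsilon>(2)] L by simp
      moreover have "2 * L * \<kappa> = 2 * (\<kappa> * L)" "0 \<le> \<kappa> * L" using \<kappa>(1) L by simp_all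
      ultimately show ?thesis using \<kappa>(5) by linarith
    qed
    moreover have "2 * L * (\<kappa> * r) \<le> r"
      using mult_right_mono[OF \<kappa>(5), of r] r by (simp add: mult.assoc)
    moreover have "ball x0 r \<subseteq> V" using r0(2) x0 r by fastforce
    ultimately show "cone_chart_at r (\<kappa> * r) P x0"
      unfolding P_def using cone_chart_at_bi_lipschitz_preimage[OF V(2) _ S(5)] \<epsilon>(1) by blast
  qed
  then show ?thesis by (simp add: P_def)
qed

lemma boundary_chart_closure_iff:
  fixes \<Omega> V :: "'a::euclidean_space set"
  assumes V: "bi_lipschitz_on L V \<Phi>" "open V" "open (\<Phi> ` V)"
    and half: "\<Phi> ` (V \<inter> \<Omega>) = \<Phi> ` V \<inter> half_space" and x: "x \<in> V"
  shows "x \<in> closure \<Omega> \<longleftrightarrow> 0 \<le> e1 \<bullet> \<Phi> x"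
proof
  assume "x \<in> closure \<Omega>"
  show "0 \<le> e1 \<bullet> \<Phi> x"
  proof (rule ccontr)
    assume "\<not> 0 \<le> e1 \<bullet> \<Phi> x"
    define T where "T = V \<inter> \<Phi> -` {y. e1 \<bullet> y < 0}"
    have "open T" unfolding T_def
      by (rule continuous_open_preimage[OF continuous_on_bi_lipschitz[OF V(1)] V(2) open_halfspace_lt])
    moreover have "x \<in> T" using x \<open>\<not> 0 \<le> e1 \<bullet> \<Phi> x\<close> by (simp add: T_def)
    ultimately have "T \<inter> \<Omega> \<noteq> {}" using \<open>x \<in> closure \<Omega>\<close> open_Int_closure_eq_empty by blast
    then obtain y where "y \<in> T" "y \<in> \<Omega>" by blast
    then have "\<Phi> y \<in> half_space" using half by (auto simp: T_def)
    then show False using \<open>y \<in> T\<close> by (simp add: T_def half_space_def first_coord_def inner_commute)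
  qed
next
  assume nonneg: "0 \<le> e1 \<bullet> \<Phi> x"
  show "x \<in> closure \<Omega>"
  proof (rule ccontr)
    assume "x \<notin> closure \<Omega>"
    define N where "N = V - closure \<Omega>"
    have "open (\<Phi> ` N)" by (rule open_image_bi_lipschitz[OF V(1,3)]) (auto simp: N_def intro: open_Diff V(2))
    moreover have "\<Phi> x \<in> \<Phi> ` N" using x \<open>x \<notin> closure \<Omega>\<close> by (simp add: N_def)
    ultimately obtain \<eta> where \<eta>: "0 < \<eta>" "ball (\<Phi> x) \<eta> \<subseteq> \<Phi> ` N"
      by (meson open_contains_ball)
    define y where "y = \<Phi> x + (\<eta> / 2) *\<^sub>R e1"
    have "y \<in> \<Phi> ` N" using \<eta> by (intro subsetD[OF \<eta>(2)]) (simp add: y_def dist_norm)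
    then obtain x' where x': "x' \<in> N" "\<Phi> x' = y" by blast
    have "0 < e1 \<bullet> y" using nonneg \<eta>(1) by (simp add: y_def inner_add_right)
    then have "y \<in> half_space" by (simp add: half_space_def first_coord_def inner_commute)
    then have "y \<in> \<Phi> ` (V \<inter> \<Omega>)" using half x' by (auto simp: N_def)
    then obtain x'' where "x'' \<in> V \<inter> \<Omega>" "\<Phi> x'' = y" by blast
    then have "x' = x''" using x' inj_on_bi_lipschitz[OF V(1)] by (auto simp: N_def dest: inj_onD)
    then show False using x' \<open>x'' \<in> V \<inter> \<Omega>\<close> closure_subset by (auto simp: N_def)
  qed
qed

lemma compact_cone_piece_near:
  fixes \<Omega> :: "'a::euclidean_space set"
  assumes \<Omega>: "bilip_domain \<Omega>" and U': "open U'" and p: "p \<in> closure \<Omega>" "p \<in> U'"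
  obtains P W where "compact P" "uniform_cone_charts P" "open W" "p \<in> W"
    "W \<inter> closure \<Omega> \<subseteq> P" "P \<subseteq> closure \<Omega> \<inter> U'"
proof (cases "p \<in> \<Omega>")
  case True
  have "open (\<Omega> \<inter> U')" using \<Omega> U' by (simp add: bilip_domain_def open_Int)
  then obtain \<rho> where \<rho>: "0 < \<rho>" "cball p \<rho> \<subseteq> \<Omega> \<inter> U'"
    using True p(2) open_contains_cball by blast
  have "bi_lipschitz_on 1 UNIV (id :: 'a \<Rightarrow> 'a)" by (simp add: bi_lipschitz_on_def)
  then have "uniform_cone_charts {x\<in>UNIV. id x \<in> cball p \<rho>}"
    by (rule uniform_cone_charts_bi_lipschitz_preimage[OF open_UNIV _ convex_cball compact_cball \<rho>(1) order_refl])
      simp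
  then have "uniform_cone_charts (cball p \<rho>)" by (simp del: mem_cball)
  moreover have "cball p \<rho> \<subseteq> closure \<Omega> \<inter> U'" using \<rho>(2) closure_subset by blast
  moreover have "ball p \<rho> \<inter> closure \<Omega> \<subseteq> cball p \<rho>" using ball_subset_cball by blast
  ultimately show ?thesis using \<rho>(1) by (intro that[of "cball p \<rho>" "ball p \<rho>"]) simp_all
next
  case False
  have "p \<in> frontier \<Omega>" using p(1) False \<Omega> by (simp add: bilip_domain_def frontier_def interior_open)
  then obtain V \<Phi> L where V: "open V" "p \<in> V" "bi_lipschitz_on L V (\<Phi> :: 'a \<Rightarrow> 'a)" "open (\<Phi> ` V)"
      "\<Phi> ` (V \<inter> \<Omega>) = \<Phi> ` V \<inter> half_space"
    using \<Omega> unfolding bilip_domain_def by blast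
  have closure_iff: "x \<in> closure \<Omega> \<longleftrightarrow> 0 \<le> e1 \<bullet> \<Phi> x" if "x \<in> V" for x
    using boundary_chart_closure_iff[OF V(3,1,4,5) that] .
  define V' where "V' = V \<inter> U'"
  have V': "open V'" "p \<in> V'" "V' \<subseteq> V" "bi_lipschitz_on L V' \<Phi>"
    using V U' p(2) bi_lipschitz_on_subset[OF V(3)] by (auto simp: V'_def)
  have "open (\<Phi> ` V')" by (rule open_image_bi_lipschitz[OF V(3,4) V'(1,3)])
  then obtain \<rho> where \<rho>: "0 < \<rho>" "cball (\<Phi> p) \<rho> \<subseteq> \<Phi> ` V'"
    using V'(2) open_contains_cball by blast
  define S where "S = cball (\<Phi> p) \<rho> \<inter> {y. 0 \<le> e1 \<bullet> y}"
  define c where "c = \<Phi> p + (\<rho> / 2) *\<^sub>R e1"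
  have "cball c (\<rho> / 4) \<subseteq> S"
  proof
    fix y assume y: "y \<in> cball c (\<rho> / 4)"
    have "dist (\<Phi> p) y \<le> dist (\<Phi> p) c + dist c y" by (rule dist_triangle)
    also have "\<dots> \<le> \<rho>" using y \<rho>(1) by (simp add: c_def dist_norm)
    finally have "dist (\<Phi> p) y \<le> \<rho>" .
    moreover have "0 \<le> e1 \<bullet> y"
    proof -
      have "e1 \<bullet> y = e1 \<bullet> \<Phi> p + \<rho> / 2 + e1 \<bullet> (y - c)"
        by (simp add: c_def inner_diff_right inner_add_right)
      moreover have "\<bar>e1 \<bullet> (y - c)\<bar> \<le> norm (y - c)"
        using Basis_le_norm[OF e1_Basis, of "y - c"] by (simp only: inner_commute)
      moreover have "norm (y - c) \<le> \<rho> / 4" using y by (simp add: dist_norm norm_minus_commute)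
      moreover have "0 \<le> e1 \<bullet> \<Phi> p" using closure_iff V(2) p(1) by blast
      ultimately show ?thesis using \<rho>(1) by linarith
    qed
    ultimately show "y \<in> S" by (simp add: S_def)
  qed
  moreover have "S \<subseteq> \<Phi> ` V'" using \<rho>(2) by (auto simp: S_def)
  moreover have "convex S" "compact S" unfolding S_def
    by (simp_all add: convex_Int convex_halfspace_ge compact_Int_closed closed_halfspace_ge)
  ultimately have "compact {x\<in>V'. \<Phi> x \<in> S}" "uniform_cone_charts {x\<in>V'. \<Phi> x \<in> S}"
    using compact_bi_lipschitz_preimage[OF V'(4)]
      uniform_cone_charts_bi_lipschitz_preimage[OF V'(1,4), of S "\<rho> / 4" c] \<rho>(1)
    by simp_all
  moreover have "open (V' \<inter> \<Phi> -` ball (\<Phi> p) \<rho>)"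
    by (rule continuous_open_preimage[OF continuous_on_bi_lipschitz[OF V'(4)] V'(1) open_ball])
  moreover have "V' \<inter> \<Phi> -` ball (\<Phi> p) \<rho> \<inter> closure \<Omega> \<subseteq> {x\<in>V'. \<Phi> x \<in> S}"
    using closure_iff V'(3) by (auto simp: S_def)
  moreover have "{x\<in>V'. \<Phi> x \<in> S} \<subseteq> closure \<Omega> \<inter> U'"
    using closure_iff V'(3) by (auto simp: S_def V'_def)
  ultimately show ?thesis using V'(2) \<rho>(1) by (intro that[of _ "V' \<inter> \<Phi> -` ball (\<Phi> p) \<rho>"]) simp_all
qed

lemma finite_cone_cover:
  fixes \<Omega> K U :: "'a::euclidean_space set"
  assumes \<Omega>: "bilip_domain \<Omega>" and K: "compact K" "K \<subseteq> closure \<Omega>" "K \<subseteq> U"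
    and U: "openin (top_of_set (closure \<Omega>)) U"
  obtains \<P> where "finite \<P>" "\<And>P. P \<in> \<P> \<Longrightarrow> compact P \<and> uniform_cone_charts P"
    "K \<subseteq> \<Union>\<P>" "\<Union>\<P> \<subseteq> U"
proof -
  obtain U' where U': "open U'" "U = closure \<Omega> \<inter> U'" using U by (auto simp: openin_open)
  have "\<exists>P W. compact P \<and> uniform_cone_charts P \<and> open W \<and> p \<in> W \<and> W \<inter> closure \<Omega> \<subseteq> P \<and> P \<subseteq> U"
    if "p \<in> K" for p
  proof -
    have "p \<in> closure \<Omega>" "p \<in> U'" using that K(2,3) U'(2) by auto
    then obtain P W where "compact P" "uniform_cone_charts P" "open W" "p \<in> W"
        "W \<inter> closure \<Omega> \<subseteq> P" "P \<subseteq> closure \<Omega> \<inter> U'"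
      by (rule compact_cone_piece_near[OF \<Omega> U'(1)])
    then show ?thesis using U'(2) by blast
  qed
  then obtain P W where PW: "\<And>p. p \<in> K \<Longrightarrow> compact (P p) \<and> uniform_cone_charts (P p) \<and>
      open (W p) \<and> p \<in> W p \<and> W p \<inter> closure \<Omega> \<subseteq> P p \<and> P p \<subseteq> U"
    by metis
  obtain K0 where K0: "K0 \<subseteq> K" "finite K0" "K \<subseteq> (\<Union>p\<in>K0. W p)"
  proof (rule compactE_image[OF K(1)])
    show "open (W p)" if "p \<in> K" for p using PW[OF that] by simp
    show "K \<subseteq> (\<Union>p\<in>K. W p)" using PW by blast
  qed (rule that)
  have "K \<subseteq> \<Union>(P ` K0)"
  proof
    fix x assume "x \<in> K"
    then obtain p where "p \<in> K0" "x \<in> W p" using K0(3) by blast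
    then show "x \<in> \<Union>(P ` K0)" using PW[of p] K0(1) K(2) \<open>x \<in> K\<close> by blast
  qed
  moreover have "\<Union>(P ` K0) \<subseteq> U" using K0(1) PW by blast
  ultimately show thesis using that[of "P ` K0"] K0(1,2) PW by blast
qed

theorem lemma6p2:
  fixes \<Omega> K U :: "'a::euclidean_space set"
  assumes "bilip_domain \<Omega>"
    and "compact K" and "K \<subseteq> closure \<Omega>"
    and "openin (top_of_set (closure \<Omega>)) U" and "K \<subseteq> U"
  shows "\<exists>K'. compact K' \<and> K \<subseteq> K' \<and> K' \<subseteq> U \<and> bilip_cone_condition K'"
proof -
  obtain \<P> where \<P>: "finite \<P>" "\<And>P. P \<in> \<P> \<Longrightarrow> compact P \<and> uniform_cone_charts P"
      "K \<subseteq> \<Union>\<P>" "\<Union>\<P> \<subseteq> U"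
    using finite_cone_cover[OF assms(1-3,5,4)] by blast
  have "compact (\<Union>\<P>)" using \<P>(1,2) by (intro compact_Union) auto
  moreover have "uniform_cone_charts (\<Union>\<P>)" using \<P>(1,2) by (intro uniform_cone_charts_Union) auto
  ultimately have "bilip_cone_condition (\<Union>\<P>)"
    by (intro bilip_cone_condition_if_uniform_cone_charts compact_imp_closed)
  then show ?thesis using \<open>compact (\<Union>\<P>)\<close> \<P>(3,4) by blast
qed

end
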